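(* Let $n\ge2$, $1\le n_c\le n-1$, let $\rho_{\text{in}}$ be an $n$-qubit density matrix, and let $f_{\text{SC}}$ be the objective function of the $n$-qubit SC-QNN with parameter $n_c$. For every parameter $\theta$ of a rotation gate acting on qubit $1$ (i.e. the qubit-1 rotation in $V_1$ or the rotation in $V_\ell$ for $n-n_c+1\le\ell\le n$), $$\mathbb{E}_{\boldsymbol\theta}\Big(\frac{\partial f_{\text{SC}}}{\partial\theta}\Big)^2=4\,\mathbb{E}_{\boldsymbol\theta}\Big(f_{\text{SC}}-\frac12\Big)^2,$$ where the expectation is over all parameters drawn independently and uniformly from $[0,2\pi]$.
   Context: Pauli matrices $\sigma_0=I,\sigma_1=X,\sigma_2=Y,\sigma_3=Z$; qubits numbered $1,\dots,n$. A rotation with parameter $\theta$ on qubit $q$ is $e^{-i\theta\sigma_2}$ on qubit $q$. A CNOT with control $c$ and target $t$ is $|0\rangle\langle0|_c\otimes I_t+|1\rangle\langle1|_c\otimes(\sigma_1)_t$. SC-QNN: $V_{\text{SC}}=V_nCX_{n-1}V_{n-1}\cdots CX_1V_1$, where $V_1$ applies a rotation with independent parameter to every qubit; for $2\le\ell\le n-n_c$, $V_\ell$ is a single rotation on qubit $n+1-\ell$; for $n-n_c+1\le\ell\le n$, $V_\ell$ is a single rotation on qubit $1$; for $1\le\ell\le n-1-n_c$, $CX_\ell$ is a CNOT with control $n+1-\ell$ and target $n-\ell$; for $n-n_c\le\ell\le n-1$, $CX_\ell$ is a CNOT with control $n+1-\ell$ and target $1$. $f_{\text{SC}}(\boldsymbol\theta)=\frac12+\frac12\text{Tr}[(\sigma_3\otimes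 I^{\otimes(n-1)})V_{\text{SC}}(\boldsymbol\theta)\rho_{\text{in}}V_{\text{SC}}(\boldsymbol\theta)^\dagger]$. *)

theory Defs
  imports "HOL-Probability.Probability"
begin

text \<open>Square complex matrices of dimension d are represented as functions
  nat => nat => complex; only entries with indices below d matter.
  For n qubits, d = 2^n and basis index i (i < 2^n) encodes the bit string
  b_1 ... b_n with qubit 1 the most significant bit, so that the ordering of
  tensor factors is qubit 1 (x) qubit 2 (x) ... (x) qubit n.\<close>

type_synonym cmat = "nat \<Rightarrow> nat \<Rightarrow> complex"

definition mmul :: "nat \<Rightarrow> cmat \<Rightarrow> cmat \<Rightarrow> cmat" where
  "mmul d A B = (\<lambda>i j. \<Sum>k<d. A i k * B k j)"

definition adj :: "cmat \<Rightarrow> cmat" where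
  "adj A = (\<lambda>i j. cnj (A j i))"

definition mtrace :: "nat \<Rightarrow> cmat \<Rightarrow> complex" where
  "mtrace d A = (\<Sum>i<d. A i i)"

definition idm :: cmat where
  "idm = (\<lambda>i j. if i = j then 1 else 0)"

definition density_matrix :: "nat \<Rightarrow> cmat \<Rightarrow> bool" where
  "density_matrix d \<rho> \<longleftrightarrow>
     (\<forall>i<d. \<forall>j<d. \<rho> i j = cnj (\<rho> j i)) \<and>
     (\<forall>v :: nat \<Rightarrow> complex. 0 \<le> Re (\<Sum>i<d. \<Sum>j<d. cnj (v i) * \<rho> i j * v j)) \<and>
     mtrace d \<rho> = 1"

definition qbit :: "nat \<Rightarrow> nat \<Rightarrow> nat \<Rightarrow> nat" where
  "qbit n q i = (i div 2 ^ (n - q)) mod 2"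

text \<open>Single-qubit 2x2 matrix U (indices 0,1) acting on qubit q of n qubits,
  i.e. I (x) ... (x) U (x) ... (x) I.\<close>
definition on_qubit :: "nat \<Rightarrow> nat \<Rightarrow> cmat \<Rightarrow> cmat" where
  "on_qubit n q U = (\<lambda>i j.
     if (\<forall>p\<in>{1..n}. p \<noteq> q \<longrightarrow> qbit n p i = qbit n p j)
     then U (qbit n q i) (qbit n q j) else 0)"

definition pauliX :: cmat where
  "pauliX = (\<lambda>a b. if a \<noteq> b then 1 else 0)"
definition pauliY :: cmat where
  "pauliY = (\<lambda>a b. if a = 0 \<and> b = 1 then - \<i> else if a = 1 \<and> b = 0 then \<i> else 0)"
definition pauliZ :: cmat where
  "pauliZ = (\<lambda>a b. if a = b then (if a = 0 then 1 else -1) else 0)"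

text \<open>exp(-i theta sigma_2) = cos theta I - i sin theta sigma_2 (since sigma_2^2 = I).\<close>
definition rotY :: "real \<Rightarrow> cmat" where
  "rotY \<theta> = (\<lambda>a b. complex_of_real (cos \<theta>) * idm a b - \<i> * complex_of_real (sin \<theta>) * pauliY a b)"

definition rot :: "nat \<Rightarrow> nat \<Rightarrow> real \<Rightarrow> cmat" where
  "rot n q \<theta> = on_qubit n q (rotY \<theta>)"

text \<open>CNOT with control c and target t:
  |0><0|_c (x) I_t + |1><1|_c (x) (sigma_1)_t.\<close>
definition cnot :: "nat \<Rightarrow> nat \<Rightarrow> nat \<Rightarrow> cmat" where
  "cnot n c t = (\<lambda>i j. if qbit n c i = qbit n c j \<and>
       (\<forall>p\<in>{1..n}. p \<noteq> c \<and> p \<noteq> t \<longrightarrow> qbit n p i = qbit n p j)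
     then (if qbit n c j = 0 then idm (qbit n t i) (qbit n t j)
           else pauliX (qbit n t i) (qbit n t j))
     else 0)"

text \<open>Parameters: theta q (1 <= q <= n) is the parameter of the rotation on
  qubit q in V_1; theta (n + l - 1) (2 <= l <= n) is the parameter of the
  single rotation in V_l.\<close>

definition sc_param_index :: "nat \<Rightarrow> nat \<Rightarrow> nat" where
  "sc_param_index n l = n + l - 1"

text \<open>V_1: a rotation with independent parameter on every qubit
  (these commute; we multiply them in the order of qubits).\<close>
fun V1_aux :: "nat \<Rightarrow> nat \<Rightarrow> (nat \<Rightarrow> real) \<Rightarrow> cmat" where
  "V1_aux n 0 \<theta> = idm"
| "V1_aux n (Suc q) \<theta> = mmul (2^n) (rot n (Suc q) (\<theta> (Suc q))) (V1_aux n q \<theta>)"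

definition V1 :: "nat \<Rightarrow> (nat \<Rightarrow> real) \<Rightarrow> cmat" where
  "V1 n \<theta> = V1_aux n n \<theta>"

definition Vl :: "nat \<Rightarrow> nat \<Rightarrow> nat \<Rightarrow> (nat \<Rightarrow> real) \<Rightarrow> cmat" where
  "Vl n nc l \<theta> =
     (if l \<le> n - nc then rot n (n + 1 - l) (\<theta> (sc_param_index n l))
      else rot n 1 (\<theta> (sc_param_index n l)))"

definition CXl :: "nat \<Rightarrow> nat \<Rightarrow> nat \<Rightarrow> cmat" where
  "CXl n nc l =
     (if l \<le> n - 1 - nc then cnot n (n + 1 - l) (n - l)
      else cnot n (n + 1 - l) 1)"

text \<open>Partial products: sc_partial n nc k \<theta> = V_(k+1) CX_k ... CX_1 V_1.\<close>
fun sc_partial :: "nat \<Rightarrow> nat \<Rightarrow> nat \<Rightarrow> (nat \<Rightarrow> real) \<Rightarrow> cmat" where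
  "sc_partial n nc 0 \<theta> = V1 n \<theta>"
| "sc_partial n nc (Suc k) \<theta> =
     mmul (2^n) (Vl n nc (Suc (Suc k)) \<theta>) (mmul (2^n) (CXl n nc (Suc k)) (sc_partial n nc k \<theta>))"

definition V_SC :: "nat \<Rightarrow> nat \<Rightarrow> (nat \<Rightarrow> real) \<Rightarrow> cmat" where
  "V_SC n nc \<theta> = sc_partial n nc (n - 1) \<theta>"

definition Z1 :: "nat \<Rightarrow> cmat" where
  "Z1 n = on_qubit n 1 pauliZ"

definition f_SC :: "nat \<Rightarrow> nat \<Rightarrow> cmat \<Rightarrow> (nat \<Rightarrow> real) \<Rightarrow> real" where
  "f_SC n nc \<rho> \<theta> = 1/2 + 1/2 * Re (mtrace (2^n)
      (mmul (2^n) (Z1 n) (mmul (2^n) (V_SC n nc \<theta>) (mmul (2^n) \<rho> (adj (V_SC n nc \<theta>))))))"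

definition param_measure :: "nat \<Rightarrow> (nat \<Rightarrow> real) measure" where
  "param_measure n = PiM {1..2*n-1} (\<lambda>_. uniform_measure lborel {0..2*pi})"

definition pderiv_param :: "((nat \<Rightarrow> real) \<Rightarrow> real) \<Rightarrow> nat \<Rightarrow> (nat \<Rightarrow> real) \<Rightarrow> real" where
  "pderiv_param f k \<theta> = deriv (\<lambda>t. f (\<theta>(k := t))) (\<theta> k)"

definition qubit1_params :: "nat \<Rightarrow> nat \<Rightarrow> nat set" where
  "qubit1_params n nc = {1} \<union> sc_param_index n ` {n - nc + 1..n}"

end

theory Submission
  imports Defs
begin

text \<open>Every gate of the SC circuit either acts trivially on qubit 1, or is a Y-rotation of
  qubit 1, or is a CNOT with target qubit 1. Shifting the angle of a qubit-1 rotation by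
  \<open>\<pi>/2\<close> multiplies that gate by \<open>-i\<sigma>\<^sub>2\<close> on qubit 1, and this factor can be pushed to the
  left end of the circuit: it commutes with the gates of the first two kinds, and passing
  a CNOT with control \<open>c\<close> and target 1 only multiplies it by \<open>\<sigma>\<^sub>3\<close> on qubit \<open>c\<close>. The
  resulting unitary \<open>diag(e) Y\<^sub>1\<close> flips the sign of the expectation of \<open>\<sigma>\<^sub>3 \<otimes> I\<close>, so
  \<open>g(\<theta> + \<pi>/2) = -g(\<theta>)\<close> for \<open>g = 2 f\<^sub>S\<^sub>C - 1\<close> as a function of that angle. Since \<open>g\<close> is a
  quadratic form in \<open>cos \<theta>, sin \<theta>\<close>, it is then a pure sinusoid \<open>a cos 2\<theta> + b sin 2\<theta>\<close>
  with \<open>a, b\<close> independent of \<open>\<theta>\<close>, and averaging over \<open>\<theta>\<close> gives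
  \<open>E (g')\<^sup>2 = 2(a\<^sup>2 + b\<^sup>2) = 4 E g\<^sup>2\<close>.\<close>

section \<open>Basis indices and the flip of qubit 1\<close>

lemma qbit_eq_bit: "qbit n p i = (if bit i (n - p) then 1 else 0)"
  unfolding qbit_def bit_iff_odd by (simp add: odd_iff_mod_2_eq_one)

lemma qbit_less_2: "qbit n p i < 2"
  unfolding qbit_def by simp

lemma qbit_cases: "qbit n p i = 0 \<or> qbit n p i = 1"
  unfolding qbit_def by auto

lemma index_eqI:
  assumes "i < 2^n" "j < 2^n" "\<forall>p\<in>{1..n}. qbit n p i = qbit n p j"
  shows "i = j"
proof (rule bit_eqI)
  fix m
  show "bit i m = bit j m"
  proof (cases "m < n")
    case True
    then have "qbit n (n - m) i = qbit n (n - m) j" and "n - (n - m) = m"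
      using assms(3) by auto
    then show ?thesis unfolding qbit_eq_bit by (auto split: if_splits)
  next
    case False
    with assms(1,2) show ?thesis
      by (metis bit_take_bit_iff take_bit_nat_eq_self_iff)
  qed
qed

definition flip_qubit1 :: "nat \<Rightarrow> nat \<Rightarrow> nat" where
  "flip_qubit1 n i = flip_bit (n - 1) i"

lemma flip_qubit1_less: "1 \<le> n \<Longrightarrow> i < 2^n \<Longrightarrow> flip_qubit1 n i < 2^n"
  unfolding flip_qubit1_def
  by (metis take_bit_nat_eq_self_iff take_bit_flip_bit_eq diff_less not_le zero_less_one
        less_le_trans)

lemma flip_qubit1_flip_qubit1 [simp]: "flip_qubit1 n (flip_qubit1 n i) = i"
  unfolding flip_qubit1_def by (rule bit_eqI) (auto simp: bit_flip_bit_iff)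

lemma flip_qubit1_eq_iff [simp]: "flip_qubit1 n i = flip_qubit1 n j \<longleftrightarrow> i = j"
  by (metis flip_qubit1_flip_qubit1)

lemma qbit1_flip_qubit1: "1 \<le> n \<Longrightarrow> qbit n 1 (flip_qubit1 n i) = 1 - qbit n 1 i"
  unfolding flip_qubit1_def qbit_eq_bit by (auto simp: bit_flip_bit_iff)

lemma qbit_flip_qubit1: "p \<in> {1..n} \<Longrightarrow> p \<noteq> 1 \<Longrightarrow> qbit n p (flip_qubit1 n i) = qbit n p i"
  unfolding flip_qubit1_def qbit_eq_bit by (auto simp: bit_flip_bit_iff)

lemma qbit_flip_qubit1_eq_iff:
  assumes "1 \<le> n" "p \<in> {1..n}"
  shows "qbit n p (flip_qubit1 n i) = qbit n p (flip_qubit1 n j) \<longleftrightarrow> qbit n p i = qbit n p j"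
  using assms qbit1_flip_qubit1[of n] qbit_cases[of n 1 i] qbit_cases[of n 1 j]
    qbit_flip_qubit1[of p n]
  by (cases "p = 1") auto

lemma flip_qubit1_neq: "1 \<le> n \<Longrightarrow> flip_qubit1 n i \<noteq> i"
  using qbit1_flip_qubit1[of n i] qbit_cases[of n 1 i] by auto

lemma agree_off_qubit1_iff:
  assumes n: "1 \<le> n" and i: "i < 2^n" and j: "j < 2^n"
  shows "(\<forall>p\<in>{1..n}. p \<noteq> 1 \<longrightarrow> qbit n p i = qbit n p j) \<longleftrightarrow> j = i \<or> j = flip_qubit1 n i"
proof
  assume agree: "\<forall>p\<in>{1..n}. p \<noteq> 1 \<longrightarrow> qbit n p i = qbit n p j"
  show "j = i \<or> j = flip_qubit1 n i"
  proof (cases "qbit n 1 j = qbit n 1 i")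
    case True
    then have "i = j" using agree by (intro index_eqI[OF i j]) metis
    then show ?thesis by simp
  next
    case False
    then have "qbit n 1 j = qbit n 1 (flip_qubit1 n i)"
      using qbit1_flip_qubit1[OF n] qbit_cases[of n 1 i] qbit_cases[of n 1 j] by auto
    then have "flip_qubit1 n i = j" using agree qbit_flip_qubit1
      by (intro index_eqI[OF flip_qubit1_less[OF n i] j]) metis
    then show ?thesis by simp
  qed
next
  assume "j = i \<or> j = flip_qubit1 n i"
  then show "\<forall>p\<in>{1..n}. p \<noteq> 1 \<longrightarrow> qbit n p i = qbit n p j"
    using qbit_flip_qubit1 by auto
qed

section \<open>Pushing \<open>diag(e) Y\<^sub>1\<close> through the gates\<close>

text \<open>Matrices are total functions; \<open>mmul (2^n)\<close> only reads the \<open>2\<^sup>n \<times> 2\<^sup>n\<close> block, so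
  identities between circuit products hold as equalities of these blocks.\<close>

definition mat_eq :: "nat \<Rightarrow> cmat \<Rightarrow> cmat \<Rightarrow> bool" where
  "mat_eq n A B \<longleftrightarrow> (\<forall>i<2^n. \<forall>j<2^n. A i j = B i j)"

lemma mat_eq_refl [simp]: "mat_eq n A A"
  by (simp add: mat_eq_def)

lemma mat_eq_trans: "mat_eq n A B \<Longrightarrow> mat_eq n B C \<Longrightarrow> mat_eq n A C"
  by (simp add: mat_eq_def)

lemma mmul_assoc: "mmul d (mmul d A B) C = mmul d A (mmul d B C)"
  unfolding mmul_def
  by (auto simp: sum_distrib_left sum_distrib_right mult.assoc intro!: ext sum.swap)

lemma mat_eq_mmul:
  "mat_eq n A A' \<Longrightarrow> mat_eq n B B' \<Longrightarrow> mat_eq n (mmul (2^n) A B) (mmul (2^n) A' B')"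
  unfolding mat_eq_def mmul_def by auto

text \<open>\<open>ysgn b\<close> is the entry of \<open>\<sigma>\<^sub>2\<close> in row \<open>b\<close>, so \<open>phased_Y1 n e\<close> is \<open>diag(e)\<close> times
  \<open>\<sigma>\<^sub>2\<close> acting on qubit 1.\<close>

definition ysgn :: "nat \<Rightarrow> complex" where
  "ysgn b = (if b = 0 then - \<i> else \<i>)"

definition phased_Y1 :: "nat \<Rightarrow> (nat \<Rightarrow> complex) \<Rightarrow> cmat" where
  "phased_Y1 n e = (\<lambda>i j. if j = flip_qubit1 n i then ysgn (qbit n 1 i) * e i else 0)"

definition flip_invariant_phase :: "nat \<Rightarrow> (nat \<Rightarrow> complex) \<Rightarrow> bool" where
  "flip_invariant_phase n e \<longleftrightarrow> (\<forall>i<2^n. e (flip_qubit1 n i) = e i \<and> e i * cnj (e i) = 1)"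

lemma flip_invariant_phase_const: "flip_invariant_phase n (\<lambda>_. - \<i>)"
  unfolding flip_invariant_phase_def by simp

lemma flip_invariant_phase_sign:
  assumes "c \<in> {1..n}" "c \<noteq> 1" "flip_invariant_phase n e"
  shows "flip_invariant_phase n (\<lambda>i. e i * (if qbit n c i = 0 then 1 else -1))"
  using assms qbit_flip_qubit1[OF assms(1,2)] unfolding flip_invariant_phase_def by auto

lemma ysgn_flip_qubit1: "1 \<le> n \<Longrightarrow> ysgn (qbit n 1 (flip_qubit1 n i)) = - ysgn (qbit n 1 i)"
  using qbit1_flip_qubit1[of n i] qbit_cases[of n 1 i] by (auto simp: ysgn_def)

lemma mmul_phased_Y1_left:
  assumes n: "1 \<le> n" and i: "i < 2^n"
  shows "mmul (2^n) (phased_Y1 n e) V i j = ysgn (qbit n 1 i) * e i * V (flip_qubit1 n i) j"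
proof -
  have "mmul (2^n) (phased_Y1 n e) V i j
      = (\<Sum>k<(2::nat)^n. if k = flip_qubit1 n i then ysgn (qbit n 1 i) * e i * V k j else 0)"
    unfolding mmul_def phased_Y1_def by (intro sum.cong) auto
  then show ?thesis using flip_qubit1_less[OF n i] by (simp add: sum.delta)
qed

lemma mmul_phased_Y1_right:
  assumes n: "1 \<le> n" and j: "j < 2^n"
  shows "mmul (2^n) V (phased_Y1 n e) i j
    = V i (flip_qubit1 n j) * (ysgn (qbit n 1 (flip_qubit1 n j)) * e (flip_qubit1 n j))"
proof -
  have "(j = flip_qubit1 n k) = (k = flip_qubit1 n j)" for k by auto
  then have "mmul (2^n) V (phased_Y1 n e) i j = (\<Sum>k<(2::nat)^n. if k = flip_qubit1 n j
      then V i k * (ysgn (qbit n 1 k) * e k) else 0)"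
    unfolding mmul_def phased_Y1_def by (intro sum.cong) auto
  then show ?thesis using flip_qubit1_less[OF n j] by (simp add: sum.delta)
qed

lemma rot_qubit1_entry:
  assumes n: "1 \<le> n" and i: "i < 2^n" and j: "j < 2^n"
  shows "rot n 1 t i j
    = (if j = i \<or> j = flip_qubit1 n i then rotY t (qbit n 1 i) (qbit n 1 j) else 0)"
  unfolding rot_def on_qubit_def using agree_off_qubit1_iff[OF n i j] by simp

lemma rotY_add_pi_half:
  assumes "a < 2" "b < 2"
  shows "rotY (t + pi/2) a b = - \<i> * ysgn a * rotY t (1 - a) b"
  using assms unfolding rotY_def ysgn_def idm_def pauliY_def
  by (auto simp: less_2_cases_iff cos_add sin_add algebra_simps)

lemma rot_qubit1_add_pi_half:
  assumes n: "1 \<le> n"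
  shows "mat_eq n (rot n 1 (t + pi/2)) (mmul (2^n) (phased_Y1 n (\<lambda>_. - \<i>)) (rot n 1 t))"
  unfolding mat_eq_def
proof (intro allI impI)
  fix i j assume i: "i < (2::nat)^n" and j: "j < (2::nat)^n"
  have "(j = flip_qubit1 n i \<or> j = i) = (j = i \<or> j = flip_qubit1 n i)" by auto
  then show "rot n 1 (t + pi/2) i j = mmul (2^n) (phased_Y1 n (\<lambda>_. - \<i>)) (rot n 1 t) i j"
    unfolding mmul_phased_Y1_left[OF n i] rot_qubit1_entry[OF n i j]
      rot_qubit1_entry[OF n flip_qubit1_less[OF n i] j]
    using rotY_add_pi_half[OF qbit_less_2 qbit_less_2, of t n 1 i n 1 j]
      qbit1_flip_qubit1[OF n, of i]
    by (auto simp: algebra_simps)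
qed

text \<open>A matrix \<open>G\<close> with \<open>off_qubit1 n G\<close> has the form \<open>I \<otimes> G'\<close> with respect to the splitting
  of the register into qubit 1 and the remaining qubits.\<close>

definition off_qubit1 :: "nat \<Rightarrow> cmat \<Rightarrow> bool" where
  "off_qubit1 n G \<longleftrightarrow> (\<forall>i<2^n. \<forall>j<2^n. G (flip_qubit1 n i) (flip_qubit1 n j) = G i j \<and>
       (qbit n 1 i \<noteq> qbit n 1 j \<longrightarrow> G i j = 0))"

lemma off_qubit1_rot:
  assumes "1 \<le> n" "q \<in> {1..n}" "q \<noteq> 1"
  shows "off_qubit1 n (rot n q s)"
  unfolding off_qubit1_def rot_def on_qubit_def
  using assms by (auto simp: qbit_flip_qubit1_eq_iff qbit_flip_qubit1)

lemma off_qubit1_cnot: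
  assumes "1 \<le> n" "c \<in> {1..n}" "c \<noteq> 1" "t \<in> {1..n}" "t \<noteq> 1"
  shows "off_qubit1 n (cnot n c t)"
  unfolding off_qubit1_def cnot_def
  using assms by (auto simp: qbit_flip_qubit1_eq_iff qbit_flip_qubit1)

lemma off_qubit1_commute_phased_Y1:
  assumes n: "1 \<le> n" and G: "off_qubit1 n G"
  shows "mat_eq n (mmul (2^n) G (phased_Y1 n (\<lambda>_. c))) (mmul (2^n) (phased_Y1 n (\<lambda>_. c)) G)"
  unfolding mat_eq_def
proof (intro allI impI)
  fix i j assume i: "i < (2::nat)^n" and j: "j < (2::nat)^n"
  have fj: "flip_qubit1 n j < 2^n" by (rule flip_qubit1_less[OF n j])
  have "G (flip_qubit1 n i) (flip_qubit1 n (flip_qubit1 n j)) = G i (flip_qubit1 n j)"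
    using G i fj unfolding off_qubit1_def by blast
  then have G_flip: "G (flip_qubit1 n i) j = G i (flip_qubit1 n j)" by simp
  have "G i (flip_qubit1 n j) * ysgn (qbit n 1 (flip_qubit1 n j))
      = ysgn (qbit n 1 i) * G i (flip_qubit1 n j)"
  proof (cases "qbit n 1 i = qbit n 1 (flip_qubit1 n j)")
    case False
    then show ?thesis using G i fj unfolding off_qubit1_def by simp
  qed simp
  then show "mmul (2^n) G (phased_Y1 n (\<lambda>_. c)) i j = mmul (2^n) (phased_Y1 n (\<lambda>_. c)) G i j"
    unfolding mmul_phased_Y1_left[OF n i] mmul_phased_Y1_right[OF n j] G_flip
    by (simp add: mult_ac)
qed

lemma rotY_flip_commute:
  assumes "a < 2" "b < 2"
  shows "rotY s a (1 - b) * ysgn (1 - b) = ysgn a * rotY s (1 - a) b"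
  using assms unfolding rotY_def ysgn_def idm_def pauliY_def
  by (auto simp: less_2_cases_iff algebra_simps)

lemma rot_qubit1_commute_phased_Y1:
  assumes n: "1 \<le> n" and e: "flip_invariant_phase n e"
  shows "mat_eq n (mmul (2^n) (rot n 1 s) (phased_Y1 n e)) (mmul (2^n) (phased_Y1 n e) (rot n 1 s))"
  unfolding mat_eq_def
proof (intro allI impI)
  fix i j assume i: "i < (2::nat)^n" and j: "j < (2::nat)^n"
  have fi: "flip_qubit1 n i < 2^n" and fj: "flip_qubit1 n j < 2^n"
    using flip_qubit1_less[OF n] i j by auto
  have c1: "(flip_qubit1 n j = i \<or> flip_qubit1 n j = flip_qubit1 n i) = (j = i \<or> j = flip_qubit1 n i)"
    and c2: "(j = flip_qubit1 n i \<or> j = i) = (j = i \<or> j = flip_qubit1 n i)"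
    by auto
  have e_flip: "j = i \<or> j = flip_qubit1 n i \<Longrightarrow> e (flip_qubit1 n j) = e i"
    using e i fi unfolding flip_invariant_phase_def by auto
  show "mmul (2^n) (rot n 1 s) (phased_Y1 n e) i j = mmul (2^n) (phased_Y1 n e) (rot n 1 s) i j"
    unfolding mmul_phased_Y1_left[OF n i] mmul_phased_Y1_right[OF n j]
      rot_qubit1_entry[OF n i fj] rot_qubit1_entry[OF n fi j] c1 flip_qubit1_flip_qubit1 c2
    using e_flip rotY_flip_commute[OF qbit_less_2 qbit_less_2, of s n 1 i n 1 j]
      qbit1_flip_qubit1[OF n, of i] qbit1_flip_qubit1[OF n, of j]
    by (auto simp: algebra_simps)
qed

lemma cnot_target1_entry:
  assumes n: "1 \<le> n" and c: "c \<in> {1..n}" "c \<noteq> 1" and i: "i < 2^n" and j: "j < 2^n"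
  shows "cnot n c 1 i j = (if j = (if qbit n c i = 0 then i else flip_qubit1 n i) then 1 else 0)"
proof -
  have "(qbit n c i = qbit n c j \<and> (\<forall>p\<in>{1..n}. p \<noteq> c \<and> p \<noteq> 1 \<longrightarrow> qbit n p i = qbit n p j))
      = (j = i \<or> j = flip_qubit1 n i)"
    using agree_off_qubit1_iff[OF n i j] c by auto
  then show ?thesis
    unfolding cnot_def
    using qbit_flip_qubit1[OF c, of i] flip_qubit1_neq[OF n, of i] qbit1_flip_qubit1[OF n, of i]
      qbit_cases[of n 1 i] qbit_cases[of n c i]
    by (auto simp: idm_def pauliX_def)
qed

text \<open>\<open>Y\<^sub>1\<close> anticommutes with \<open>\<sigma>\<^sub>1\<close> on qubit 1, so moving it across a CNOT with target 1
  produces the sign \<open>\<sigma>\<^sub>3\<close> on the control qubit.\<close>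

lemma cnot_target1_phased_Y1:
  assumes n: "1 \<le> n" and c: "c \<in> {1..n}" "c \<noteq> 1" and e: "flip_invariant_phase n e"
  shows "mat_eq n (mmul (2^n) (cnot n c 1) (phased_Y1 n e))
      (mmul (2^n) (phased_Y1 n (\<lambda>i. e i * (if qbit n c i = 0 then 1 else -1))) (cnot n c 1))"
  unfolding mat_eq_def
proof (intro allI impI)
  fix i j assume i: "i < (2::nat)^n" and j: "j < (2::nat)^n"
  define i' where "i' = (if qbit n c i = 0 then i else flip_qubit1 n i)"
  have i': "i' < 2^n" using flip_qubit1_less[OF n i] i unfolding i'_def by simp
  have "cnot n c 1 i k = (if k = i' then 1 else 0)" if "k < 2^n" for k
    unfolding i'_def using cnot_target1_entry[OF n c i that] by auto
  then have "mmul (2^n) (cnot n c 1) (phased_Y1 n e) i j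
      = (\<Sum>k<(2::nat)^n. if k = i' then phased_Y1 n e k j else 0)"
    unfolding mmul_def by (intro sum.cong refl) simp
  also have "\<dots> = phased_Y1 n e i' j"
    using i' by (simp add: sum.delta)
  finally have lhs: "mmul (2^n) (cnot n c 1) (phased_Y1 n e) i j = phased_Y1 n e i' j" .
  have e_flip: "e (flip_qubit1 n i) = e i" using e i unfolding flip_invariant_phase_def by blast
  show "mmul (2^n) (cnot n c 1) (phased_Y1 n e) i j
      = mmul (2^n) (phased_Y1 n (\<lambda>i. e i * (if qbit n c i = 0 then 1 else -1))) (cnot n c 1) i j"
    unfolding lhs mmul_phased_Y1_left[OF n i]
      cnot_target1_entry[OF n c flip_qubit1_less[OF n i] j] qbit_flip_qubit1[OF c] i'_def
    using ysgn_flip_qubit1[OF n, of i] e_flip by (auto simp: phased_Y1_def)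
qed

section \<open>The expectation of \<open>\<sigma>\<^sub>3\<close> on qubit 1\<close>

definition z1_sign :: "nat \<Rightarrow> nat \<Rightarrow> complex" where
  "z1_sign n i = (if qbit n 1 i = 0 then 1 else -1)"

definition conj_diag :: "nat \<Rightarrow> cmat \<Rightarrow> cmat \<Rightarrow> nat \<Rightarrow> complex" where
  "conj_diag n \<rho> V i = (\<Sum>a<(2::nat)^n. \<Sum>b<(2::nat)^n. V i a * \<rho> a b * cnj (V i b))"

definition z1_expval :: "nat \<Rightarrow> cmat \<Rightarrow> cmat \<Rightarrow> real" where
  "z1_expval n \<rho> V = Re (mtrace (2^n) (mmul (2^n) (Z1 n) (mmul (2^n) V (mmul (2^n) \<rho> (adj V)))))"

lemma f_SC_eq: "f_SC n nc \<rho> \<theta> = 1/2 + z1_expval n \<rho> (V_SC n nc \<theta>) / 2"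
  unfolding f_SC_def z1_expval_def by simp

lemma Z1_entry:
  assumes n: "1 \<le> n" and i: "i < 2^n" and k: "k < 2^n"
  shows "Z1 n i k = (if k = i then z1_sign n i else 0)"
proof -
  have "qbit n 1 (flip_qubit1 n i) \<noteq> qbit n 1 i"
    using qbit1_flip_qubit1[OF n, of i] qbit_cases[of n 1 i] by auto
  then show ?thesis
    unfolding Z1_def on_qubit_def using agree_off_qubit1_iff[OF n i k]
    by (auto simp: pauliZ_def z1_sign_def)
qed

lemma z1_expval_eq_sum:
  assumes n: "1 \<le> n"
  shows "z1_expval n \<rho> V = Re (\<Sum>i<(2::nat)^n. z1_sign n i * conj_diag n \<rho> V i)"
proof -
  let ?W = "mmul (2^n) V (mmul (2^n) \<rho> (adj V))"
  have "mtrace (2^n) (mmul (2^n) (Z1 n) ?W) = (\<Sum>i<(2::nat)^n. \<Sum>k<(2::nat)^n. Z1 n i k * ?W k i)"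
    unfolding mtrace_def mmul_def[of _ "Z1 n"] by simp
  also have "\<dots> = (\<Sum>i<(2::nat)^n. \<Sum>k<(2::nat)^n. if k = i then z1_sign n i * ?W k i else 0)"
    by (intro sum.cong refl) (simp add: Z1_entry[OF n])
  also have "\<dots> = (\<Sum>i<(2::nat)^n. z1_sign n i * conj_diag n \<rho> V i)"
    unfolding conj_diag_def mmul_def adj_def by (simp add: sum_distrib_left mult.assoc)
  finally show ?thesis unfolding z1_expval_def by simp
qed

lemma z1_sign_flip_qubit1: "1 \<le> n \<Longrightarrow> z1_sign n (flip_qubit1 n i) = - z1_sign n i"
  using qbit1_flip_qubit1[of n i] qbit_cases[of n 1 i] by (auto simp: z1_sign_def)

text \<open>Left multiplication by \<open>diag(c) Y\<^sub>1\<close> with \<open>|c i| = 1\<close> permutes the diagonal of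
  \<open>V \<rho> V\<^sup>\<dagger>\<close> by the flip of qubit 1, which reverses the sign of \<open>\<sigma>\<^sub>3\<close> on qubit 1.\<close>

lemma z1_expval_flip_qubit1:
  assumes n: "1 \<le> n"
    and V': "\<forall>i<2^n. \<forall>j<2^n. V' i j = c i * V (flip_qubit1 n i) j"
    and c: "\<forall>i<2^n. c i * cnj (c i) = 1"
  shows "z1_expval n \<rho> V' = - z1_expval n \<rho> V"
proof -
  have diag: "conj_diag n \<rho> V' i = conj_diag n \<rho> V (flip_qubit1 n i)" if i: "i < 2^n" for i
  proof -
    have "conj_diag n \<rho> V' i = (\<Sum>a<(2::nat)^n. \<Sum>b<(2::nat)^n. (c i * cnj (c i))
        * (V (flip_qubit1 n i) a * \<rho> a b * cnj (V (flip_qubit1 n i) b)))"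
      unfolding conj_diag_def by (intro sum.cong refl) (simp add: V' i mult_ac)
    then show ?thesis using c i unfolding conj_diag_def by simp
  qed
  have "(\<Sum>i<(2::nat)^n. z1_sign n i * conj_diag n \<rho> V' i)
      = (\<Sum>i<(2::nat)^n. z1_sign n i * conj_diag n \<rho> V (flip_qubit1 n i))"
    by (intro sum.cong refl) (simp add: diag)
  also have "\<dots> = (\<Sum>j<(2::nat)^n. z1_sign n (flip_qubit1 n j) * conj_diag n \<rho> V j)"
    by (rule sum.reindex_bij_witness[where i="flip_qubit1 n" and j="flip_qubit1 n"])
       (auto simp: flip_qubit1_less[OF n])
  also have "\<dots> = - (\<Sum>j<(2::nat)^n. z1_sign n j * conj_diag n \<rho> V j)"
    by (simp add: z1_sign_flip_qubit1[OF n] sum_negf)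
  finally show ?thesis unfolding z1_expval_eq_sum[OF n] by simp
qed

section \<open>Dependence on a single angle\<close>

definition trig_linear :: "(real \<Rightarrow> cmat) \<Rightarrow> bool" where
  "trig_linear \<phi> \<longleftrightarrow>
     (\<forall>t i j. \<phi> t i j = of_real (cos t) * \<phi> 0 i j + of_real (sin t) * \<phi> (pi/2) i j)"

lemma trig_linear_mmul_left:
  assumes "trig_linear \<phi>"
  shows "trig_linear (\<lambda>t. mmul d C (\<phi> t))"
  unfolding trig_linear_def
proof (intro allI)
  fix t i j
  have entry: "\<phi> t a j = of_real (cos t) * \<phi> 0 a j + of_real (sin t) * \<phi> (pi/2) a j" for a
    using assms unfolding trig_linear_def by blast
  show "mmul d C (\<phi> t) i j
      = of_real (cos t) * mmul d C (\<phi> 0) i j + of_real (sin t) * mmul d C (\<phi> (pi/2)) i j"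
    unfolding mmul_def entry by (simp add: distrib_left sum.distrib sum_distrib_left mult_ac)
qed

lemma trig_linear_mmul_right:
  assumes "trig_linear \<phi>"
  shows "trig_linear (\<lambda>t. mmul d (\<phi> t) C)"
  unfolding trig_linear_def
proof (intro allI)
  fix t i j
  have entry: "\<phi> t i a = of_real (cos t) * \<phi> 0 i a + of_real (sin t) * \<phi> (pi/2) i a" for a
    using assms unfolding trig_linear_def by blast
  show "mmul d (\<phi> t) C i j
      = of_real (cos t) * mmul d (\<phi> 0) C i j + of_real (sin t) * mmul d (\<phi> (pi/2)) C i j"
    unfolding mmul_def entry
    by (simp add: distrib_right distrib_left sum.distrib sum_distrib_left mult_ac)
qed

lemma trig_linear_rot: "trig_linear (\<lambda>t. rot n q t)"
  unfolding trig_linear_def rot_def on_qubit_def rotY_def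
  by (auto simp: idm_def pauliY_def)

lemma conj_diag_trig_linear:
  assumes "trig_linear \<phi>"
  shows "conj_diag n \<rho> (\<phi> t) i = of_real ((cos t)^2) * conj_diag n \<rho> (\<phi> 0) i
    + of_real ((sin t)^2) * conj_diag n \<rho> (\<phi> (pi/2)) i
    + of_real (cos t * sin t) * (\<Sum>a<(2::nat)^n. \<Sum>b<(2::nat)^n. \<phi> 0 i a * \<rho> a b * cnj (\<phi> (pi/2) i b)
        + \<phi> (pi/2) i a * \<rho> a b * cnj (\<phi> 0 i b))"
proof -
  have expand: "(of_real c * A + of_real s * B) * r * cnj (of_real c * A' + of_real s * B')
      = of_real c^2 * (A * r * cnj A') + of_real s^2 * (B * r * cnj B')
        + (of_real c * of_real s) * (A * r * cnj B' + B * r * cnj A')"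
    for c s :: real and A B A' B' r :: complex
    by (simp add: algebra_simps power2_eq_square)
  let ?c = "complex_of_real (cos t)" and ?s = "complex_of_real (sin t)"
  have entry: "\<phi> t i a = ?c * \<phi> 0 i a + ?s * \<phi> (pi/2) i a" for a
    using assms unfolding trig_linear_def by blast
  have "conj_diag n \<rho> (\<phi> t) i = (\<Sum>a<(2::nat)^n. \<Sum>b<(2::nat)^n.
      ?c^2 * (\<phi> 0 i a * \<rho> a b * cnj (\<phi> 0 i b))
      + ?s^2 * (\<phi> (pi/2) i a * \<rho> a b * cnj (\<phi> (pi/2) i b))
      + (?c * ?s) * (\<phi> 0 i a * \<rho> a b * cnj (\<phi> (pi/2) i b)
        + \<phi> (pi/2) i a * \<rho> a b * cnj (\<phi> 0 i b)))"
    unfolding conj_diag_def entry by (simp only: expand)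
  then show ?thesis
    unfolding conj_diag_def by (simp add: distrib_left sum.distrib sum_distrib_left)
qed

lemma z1_expval_trig_linear:
  assumes n: "1 \<le> n" and "trig_linear \<phi>"
  obtains h where "\<And>t. z1_expval n \<rho> (\<phi> t)
    = (cos t)^2 * z1_expval n \<rho> (\<phi> 0) + (sin t)^2 * z1_expval n \<rho> (\<phi> (pi/2)) + cos t * sin t * h"
proof
  define x where "x i = (\<Sum>a<(2::nat)^n. \<Sum>b<(2::nat)^n. \<phi> 0 i a * \<rho> a b * cnj (\<phi> (pi/2) i b)
      + \<phi> (pi/2) i a * \<rho> a b * cnj (\<phi> 0 i b))" for i
  fix t
  have "(\<Sum>i<(2::nat)^n. z1_sign n i * conj_diag n \<rho> (\<phi> t) i)
      = of_real ((cos t)^2) * (\<Sum>i<(2::nat)^n. z1_sign n i * conj_diag n \<rho> (\<phi> 0) i)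
      + of_real ((sin t)^2) * (\<Sum>i<(2::nat)^n. z1_sign n i * conj_diag n \<rho> (\<phi> (pi/2)) i)
      + of_real (cos t * sin t) * (\<Sum>i<(2::nat)^n. z1_sign n i * x i)"
    unfolding conj_diag_trig_linear[OF assms(2), where t=t] x_def[symmetric]
    by (simp add: distrib_left sum.distrib sum_distrib_left mult_ac)
  then show "z1_expval n \<rho> (\<phi> t) = (cos t)^2 * z1_expval n \<rho> (\<phi> 0)
      + (sin t)^2 * z1_expval n \<rho> (\<phi> (pi/2)) + cos t * sin t * Re (\<Sum>i<(2::nat)^n. z1_sign n i * x i)"
    unfolding z1_expval_eq_sum[OF n] by simp
qed

section \<open>Shifting a qubit-1 angle of the SC circuit\<close>

lemma mat_eq_push_left:
  assumes "mat_eq n (mmul (2^n) G (phased_Y1 n e)) (mmul (2^n) (phased_Y1 n e') G)"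
    and "mat_eq n A (mmul (2^n) (phased_Y1 n e) B)"
  shows "mat_eq n (mmul (2^n) G A) (mmul (2^n) (phased_Y1 n e') (mmul (2^n) G B))"
proof -
  have "mat_eq n (mmul (2^n) G A) (mmul (2^n) G (mmul (2^n) (phased_Y1 n e) B))"
    by (rule mat_eq_mmul[OF mat_eq_refl assms(2)])
  moreover have "mat_eq n (mmul (2^n) (mmul (2^n) G (phased_Y1 n e)) B)
      (mmul (2^n) (mmul (2^n) (phased_Y1 n e') G) B)"
    by (rule mat_eq_mmul[OF assms(1) mat_eq_refl])
  ultimately show ?thesis unfolding mmul_assoc by (rule mat_eq_trans)
qed

lemma V1_aux_cong: "(\<forall>j\<in>{1..q}. \<theta> j = \<theta>' j) \<Longrightarrow> V1_aux n q \<theta> = V1_aux n q \<theta>'"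
  by (induction q) auto

lemma sc_partial_cong:
  "(\<forall>j\<in>{1..n+m}. \<theta> j = \<theta>' j) \<Longrightarrow> sc_partial n nc m \<theta> = sc_partial n nc m \<theta>'"
proof (induction m)
  case 0
  then show ?case using V1_aux_cong[of n \<theta> \<theta>' n] by (simp add: V1_def)
next
  case (Suc m)
  have "Vl n nc (Suc (Suc m)) \<theta> = Vl n nc (Suc (Suc m)) \<theta>'"
    using Suc.prems unfolding Vl_def sc_param_index_def by auto
  with Suc show ?case by simp
qed

lemma qubit1_paramsE:
  assumes k: "k \<in> qubit1_params n nc" and nc: "nc \<le> n - 1"
  obtains "k = 1"
  | g where "n - nc \<le> Suc g" "Suc g \<le> n - 1" "k = n + Suc g"
      "\<And>\<theta> s. sc_partial n nc (Suc g) (\<theta>(k := s))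
          = mmul (2^n) (rot n 1 s) (mmul (2^n) (CXl n nc (Suc g)) (sc_partial n nc g \<theta>))"
proof (cases "k = 1")
  case False
  then obtain l where l: "l \<in> {n - nc + 1..n}" and kl: "k = n + l - 1"
    using k unfolding qubit1_params_def sc_param_index_def by auto
  define g where "g = l - 2"
  have g: "n - nc \<le> Suc g" "Suc g \<le> n - 1" "k = n + Suc g" "l = Suc (Suc g)"
    using l kl nc unfolding g_def by auto
  have "sc_partial n nc g (\<theta>(k := s)) = sc_partial n nc g \<theta>" for \<theta> s
    by (rule sc_partial_cong) (use g in auto)
  moreover have "Vl n nc (Suc (Suc g)) (\<theta>(k := s)) = rot n 1 s" for \<theta> s
    using g unfolding Vl_def sc_param_index_def by auto
  ultimately show ?thesis using that(2)[OF g(1-3)] by simp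
qed (rule that(1))

text \<open>As long as \<open>m < n - nc\<close>, gates acting on qubits other than 1 are still to come, and
  those commute only with a constant phase.\<close>

definition shifted_partial :: "nat \<Rightarrow> nat \<Rightarrow> nat \<Rightarrow> (nat \<Rightarrow> real) \<Rightarrow> (nat \<Rightarrow> real) \<Rightarrow> bool" where
  "shifted_partial n nc m \<theta>' \<theta> \<longleftrightarrow> (\<exists>e. flip_invariant_phase n e \<and> (m < n - nc \<longrightarrow> e = (\<lambda>_. - \<i>)) \<and>
      mat_eq n (sc_partial n nc m \<theta>') (mmul (2^n) (phased_Y1 n e) (sc_partial n nc m \<theta>)))"

lemma gates_off_qubit1:
  assumes nc: "1 \<le> nc" and m: "Suc m < n - nc"
  shows "off_qubit1 n (CXl n nc (Suc m))" "off_qubit1 n (Vl n nc (Suc (Suc m)) \<theta>)"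
proof -
  have n: "1 \<le> n" using m by simp
  have "CXl n nc (Suc m) = cnot n (n - m) (n - Suc m)"
    and "Vl n nc (Suc (Suc m)) \<theta> = rot n (n - Suc m) (\<theta> (sc_param_index n (Suc (Suc m))))"
    using m unfolding CXl_def Vl_def by auto
  then show "off_qubit1 n (CXl n nc (Suc m))" "off_qubit1 n (Vl n nc (Suc (Suc m)) \<theta>)"
    using nc m by (auto intro!: off_qubit1_cnot[OF n] off_qubit1_rot[OF n])
qed

lemma gates_on_qubit1:
  assumes "n - nc \<le> Suc m"
  shows "CXl n nc (Suc m) = cnot n (n - m) 1"
    "Vl n nc (Suc (Suc m)) \<theta> = rot n 1 (\<theta> (sc_param_index n (Suc (Suc m))))"
  using assms unfolding CXl_def Vl_def by auto

lemma shifted_partial_Suc: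
  assumes nc: "1 \<le> nc" and m: "Suc m \<le> n - 1" and k: "k \<le> n + m"
    and agree: "\<forall>j. j \<noteq> k \<longrightarrow> \<theta>' j = \<theta> j"
    and shifted: "shifted_partial n nc m \<theta>' \<theta>"
  shows "shifted_partial n nc (Suc m) \<theta>' \<theta>"
proof -
  have n: "1 \<le> n" using m by simp
  obtain e where e: "flip_invariant_phase n e" and e_const: "m < n - nc \<longrightarrow> e = (\<lambda>_. - \<i>)"
    and P: "mat_eq n (sc_partial n nc m \<theta>') (mmul (2^n) (phased_Y1 n e) (sc_partial n nc m \<theta>))"
    using shifted unfolding shifted_partial_def by blast
  have V_eq: "Vl n nc (Suc (Suc m)) \<theta>' = Vl n nc (Suc (Suc m)) \<theta>"
    using agree k unfolding Vl_def sc_param_index_def by auto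
  show ?thesis
  proof (cases "Suc m < n - nc")
    case True
    then have e0: "e = (\<lambda>_. - \<i>)" using e_const by simp
    note off = gates_off_qubit1[OF nc True]
    have "mat_eq n (sc_partial n nc (Suc m) \<theta>')
        (mmul (2^n) (phased_Y1 n e) (sc_partial n nc (Suc m) \<theta>))"
      unfolding sc_partial.simps(2) V_eq e0
      by (intro mat_eq_push_left[OF off_qubit1_commute_phased_Y1[OF n off(2)]]
          mat_eq_push_left[OF off_qubit1_commute_phased_Y1[OF n off(1)]] P[unfolded e0])
    then show ?thesis unfolding shifted_partial_def using e e0 by blast
  next
    case False
    then have gates: "CXl n nc (Suc m) = cnot n (n - m) 1"
      "Vl n nc (Suc (Suc m)) \<theta> = rot n 1 (\<theta> (sc_param_index n (Suc (Suc m))))"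
      using gates_on_qubit1 by auto
    have c: "n - m \<in> {1..n}" "n - m \<noteq> 1" using m by auto
    define e' where "e' = (\<lambda>i. e i * (if qbit n (n - m) i = 0 then 1 else -1))"
    have e': "flip_invariant_phase n e'"
      unfolding e'_def by (rule flip_invariant_phase_sign[OF c e])
    have "mat_eq n (sc_partial n nc (Suc m) \<theta>')
        (mmul (2^n) (phased_Y1 n e') (sc_partial n nc (Suc m) \<theta>))"
      unfolding sc_partial.simps(2) V_eq gates
      by (intro mat_eq_push_left[OF rot_qubit1_commute_phased_Y1[OF n e']]
          mat_eq_push_left[OF cnot_target1_phased_Y1[OF n c e] P, folded e'_def])
    then show ?thesis unfolding shifted_partial_def using e' False by auto
  qed
qed

lemma shifted_partial_upto:
  assumes nc: "1 \<le> nc" and m: "m0 \<le> m" "m \<le> n - 1" and k: "k \<le> n + m0"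
    and agree: "\<forall>j. j \<noteq> k \<longrightarrow> \<theta>' j = \<theta> j"
    and shifted: "shifted_partial n nc m0 \<theta>' \<theta>"
  shows "shifted_partial n nc m \<theta>' \<theta>"
  using m
proof (induction m rule: dec_induct)
  case base
  show ?case by (rule shifted)
next
  case (step p)
  then show ?case using k by (intro shifted_partial_Suc[OF nc _ _ agree]) auto
qed

lemma V1_aux_shift_qubit1:
  assumes n: "1 \<le> n" and q: "1 \<le> q" "q \<le> n"
  shows "mat_eq n (V1_aux n q (\<theta>(1 := t + pi/2)))
    (mmul (2^n) (phased_Y1 n (\<lambda>_. - \<i>)) (V1_aux n q (\<theta>(1 := t))))"
  using q
proof (induction q rule: dec_induct)
  case base
  have "mat_eq n (mmul (2^n) (rot n 1 (t + pi/2)) idm)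
      (mmul (2^n) (mmul (2^n) (phased_Y1 n (\<lambda>_. - \<i>)) (rot n 1 t)) idm)"
    by (rule mat_eq_mmul[OF rot_qubit1_add_pi_half[OF n] mat_eq_refl])
  then show ?case by (simp add: mmul_assoc)
next
  case (step p)
  then have "off_qubit1 n (rot n (Suc p) (\<theta> (Suc p)))"
    by (intro off_qubit1_rot[OF n]) auto
  from mat_eq_push_left[OF off_qubit1_commute_phased_Y1[OF n this] step.IH] step.hyps step.prems
  show ?case by simp
qed

lemma V_SC_shift_qubit1_param:
  assumes nc: "1 \<le> nc" "nc \<le> n - 1" and k: "k \<in> qubit1_params n nc"
  obtains e where "flip_invariant_phase n e"
    "mat_eq n (V_SC n nc (\<theta>(k := t + pi/2))) (mmul (2^n) (phased_Y1 n e) (V_SC n nc (\<theta>(k := t))))"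
proof -
  have n: "1 \<le> n" using nc by simp
  have agree: "\<forall>j. j \<noteq> k \<longrightarrow> (\<theta>(k := t + pi/2)) j = (\<theta>(k := t)) j" by simp
  from k nc(2) have "shifted_partial n nc (n - 1) (\<theta>(k := t + pi/2)) (\<theta>(k := t))"
  proof (cases rule: qubit1_paramsE)
    case 1
    have "shifted_partial n nc 0 (\<theta>(k := t + pi/2)) (\<theta>(k := t))"
      unfolding shifted_partial_def 1 using V1_aux_shift_qubit1[OF n n order_refl, of \<theta> t]
        flip_invariant_phase_const by (auto simp: V1_def)
    from shifted_partial_upto[OF nc(1) _ _ _ agree this] 1 n show ?thesis by simp
  next
    case (2 g)
    have "mat_eq n (sc_partial n nc (Suc g) (\<theta>(k := t + pi/2)))
        (mmul (2^n) (phased_Y1 n (\<lambda>_. - \<i>)) (sc_partial n nc (Suc g) (\<theta>(k := t))))"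
      unfolding 2(4) using mat_eq_mmul[OF rot_qubit1_add_pi_half[OF n] mat_eq_refl]
      by (simp add: mmul_assoc)
    then have "shifted_partial n nc (Suc g) (\<theta>(k := t + pi/2)) (\<theta>(k := t))"
      unfolding shifted_partial_def using flip_invariant_phase_const 2(1) by auto
    from shifted_partial_upto[OF nc(1) _ _ _ agree this] 2 show ?thesis by simp
  qed
  then show ?thesis using that unfolding shifted_partial_def V_SC_def by blast
qed

lemma z1_expval_V_SC_shift:
  assumes nc: "1 \<le> nc" "nc \<le> n - 1" and k: "k \<in> qubit1_params n nc"
  shows "z1_expval n \<rho> (V_SC n nc (\<theta>(k := t + pi/2))) = - z1_expval n \<rho> (V_SC n nc (\<theta>(k := t)))"
proof -
  have n: "1 \<le> n" using nc by simp
  obtain e where e: "flip_invariant_phase n e" and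
    shift: "mat_eq n (V_SC n nc (\<theta>(k := t + pi/2))) (mmul (2^n) (phased_Y1 n e) (V_SC n nc (\<theta>(k := t))))"
    using V_SC_shift_qubit1_param[OF nc k] by blast
  show ?thesis
  proof (rule z1_expval_flip_qubit1[OF n])
    show "\<forall>i<2^n. \<forall>j<2^n. V_SC n nc (\<theta>(k := t + pi/2)) i j
        = (ysgn (qbit n 1 i) * e i) * V_SC n nc (\<theta>(k := t)) (flip_qubit1 n i) j"
      using shift mmul_phased_Y1_left[OF n] unfolding mat_eq_def by simp
    have "ysgn b * cnj (ysgn b) = 1" for b by (simp add: ysgn_def)
    then show "\<forall>i<2^n. ysgn (qbit n 1 i) * e i * cnj (ysgn (qbit n 1 i) * e i) = 1"
      using e unfolding flip_invariant_phase_def by (simp add: mult_ac)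
  qed
qed

lemma trig_linear_sc_partial_upto:
  assumes "m0 \<le> m" "k \<le> n + m0" "trig_linear (\<lambda>t. sc_partial n nc m0 (\<theta>(k := t)))"
  shows "trig_linear (\<lambda>t. sc_partial n nc m (\<theta>(k := t)))"
  using assms(1)
proof (induction m rule: dec_induct)
  case base
  show ?case by (rule assms(3))
next
  case (step p)
  have V: "Vl n nc (Suc (Suc p)) (\<theta>(k := t)) = Vl n nc (Suc (Suc p)) \<theta>" for t
    using step.hyps assms(2) unfolding Vl_def sc_param_index_def by auto
  show ?case
    unfolding sc_partial.simps(2) V by (intro trig_linear_mmul_left step.IH)
qed

lemma trig_linear_V1_aux:
  assumes "1 \<le> q"
  shows "trig_linear (\<lambda>t. V1_aux n q (\<theta>(1 := t)))"
  using assms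
proof (induction q rule: dec_induct)
  case base
  show ?case using trig_linear_mmul_right[OF trig_linear_rot[of n 1], of "2^n" idm] by simp
next
  case (step p)
  then show ?case using trig_linear_mmul_left[OF step.IH] by simp
qed

lemma trig_linear_V_SC:
  assumes nc: "1 \<le> nc" "nc \<le> n - 1" and k: "k \<in> qubit1_params n nc"
  shows "trig_linear (\<lambda>t. V_SC n nc (\<theta>(k := t)))"
  using k nc(2)
proof (cases rule: qubit1_paramsE)
  case 1
  have "1 \<le> n" using nc by simp
  with 1 have "trig_linear (\<lambda>t. sc_partial n nc 0 (\<theta>(k := t)))"
    using trig_linear_V1_aux[of n n \<theta>] by (simp add: V1_def)
  then show ?thesis
    unfolding V_SC_def by (rule trig_linear_sc_partial_upto[rotated 2]) (use 1 nc in auto)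
next
  case (2 g)
  have "trig_linear (\<lambda>t. sc_partial n nc (Suc g) (\<theta>(k := t)))"
    unfolding 2(4) by (rule trig_linear_mmul_right[OF trig_linear_rot])
  then show ?thesis
    unfolding V_SC_def by (rule trig_linear_sc_partial_upto[rotated 2]) (use 2 in auto)
qed

text \<open>The quadratic form in \<open>cos t, sin t\<close> given by \<open>z1_expval_trig_linear\<close> has no
  constant part because the shift by \<open>\<pi>/2\<close> changes its sign.\<close>

lemma z1_expval_V_SC_sinusoid:
  assumes nc: "1 \<le> nc" "nc \<le> n - 1" and k: "k \<in> qubit1_params n nc"
  shows "z1_expval n \<rho> (V_SC n nc (\<theta>(k := t)))
    = z1_expval n \<rho> (V_SC n nc (\<theta>(k := 0))) * cos (2*t)
      + z1_expval n \<rho> (V_SC n nc (\<theta>(k := pi/4))) * sin (2*t)"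
proof -
  have n: "1 \<le> n" using nc by simp
  define g where "g t = z1_expval n \<rho> (V_SC n nc (\<theta>(k := t)))" for t
  obtain h where h: "\<And>t. g t = (cos t)^2 * g 0 + (sin t)^2 * g (pi/2) + cos t * sin t * h"
    using z1_expval_trig_linear[OF n trig_linear_V_SC[OF nc k]] unfolding g_def by blast
  have "g (pi/2) = - g 0"
    using z1_expval_V_SC_shift[OF nc k, of \<rho> \<theta> 0] unfolding g_def by simp
  then have sinusoid: "g s = g 0 * cos (2 * s) + h/2 * sin (2 * s)" for s
    unfolding h[of s] cos_double sin_double by (simp add: algebra_simps)
  from sinusoid[of "pi/4"] have "g (pi/4) = h/2" by simp
  with sinusoid[of t] show ?thesis unfolding g_def by simp
qed

section \<open>Boundedness and measurability\<close>

definition entries_bounded :: "nat \<Rightarrow> cmat \<Rightarrow> real \<Rightarrow> bool" where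
  "entries_bounded n A a \<longleftrightarrow> (\<forall>i<2^n. \<forall>j<2^n. norm (A i j) \<le> a)"

lemma entries_bounded_mmul:
  assumes A: "entries_bounded n A a" and B: "entries_bounded n B b"
  shows "entries_bounded n (mmul (2^n) A B) (2^n * a * b)"
  unfolding entries_bounded_def
proof (intro allI impI)
  fix i j :: nat assume i: "i < 2^n" and j: "j < 2^n"
  have "norm (mmul (2^n) A B i j) \<le> (\<Sum>k<(2::nat)^n. norm (A i k) * norm (B k j))"
    unfolding mmul_def by (rule order_trans[OF norm_sum]) (simp add: norm_mult)
  also have "\<dots> \<le> (\<Sum>k<(2::nat)^n. a * b)"
  proof (rule sum_mono)
    fix k assume "k \<in> {..<(2::nat)^n}"
    then have "norm (A i k) \<le> a" "norm (B k j) \<le> b"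
      using A B i j unfolding entries_bounded_def by auto
    then show "norm (A i k) * norm (B k j) \<le> a * b"
      by (intro mult_mono) (auto intro: order_trans[OF norm_ge_zero])
  qed
  finally show "norm (mmul (2^n) A B i j) \<le> 2^n * a * b" by simp
qed

lemma entries_bounded_adj: "entries_bounded n A a \<Longrightarrow> entries_bounded n (adj A) a"
  unfolding entries_bounded_def adj_def by simp

lemma norm_mtrace_le: "entries_bounded n A a \<Longrightarrow> norm (mtrace (2^n) A) \<le> 2^n * a"
  unfolding mtrace_def entries_bounded_def
  by (rule order_trans[OF norm_sum]) (use sum_mono[of "{..<2^n}" "\<lambda>i. norm (A i i)" "\<lambda>_. a"] in simp)

lemma entries_bounded_exists: "\<exists>a. entries_bounded n A a"
proof
  show "entries_bounded n A (\<Sum>i<(2::nat)^n. \<Sum>j<(2::nat)^n. norm (A i j))"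
    unfolding entries_bounded_def
  proof (intro allI impI)
    fix i j :: nat assume i: "i < 2^n" and j: "j < 2^n"
    have "norm (A i j) \<le> (\<Sum>j<(2::nat)^n. norm (A i j))"
      by (rule member_le_sum) (use j in auto)
    also have "\<dots> \<le> (\<Sum>i<(2::nat)^n. \<Sum>j<(2::nat)^n. norm (A i j))"
      by (rule member_le_sum[where f="\<lambda>i. \<Sum>j<(2::nat)^n. norm (A i j)"])
        (use i in \<open>auto intro: sum_nonneg\<close>)
    finally show "norm (A i j) \<le> (\<Sum>i<(2::nat)^n. \<Sum>j<(2::nat)^n. norm (A i j))" .
  qed
qed

lemma norm_rotY_le: "norm (rotY t a b) \<le> 2"
proof -
  have "norm (rotY t a b) \<le> norm (complex_of_real (cos t) * idm a b)
      + norm (\<i> * complex_of_real (sin t) * pauliY a b)"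
    unfolding rotY_def by (rule norm_triangle_ineq4)
  also have "\<dots> \<le> 1 + 1"
    using abs_cos_le_one[of t] abs_sin_le_one[of t]
    by (intro add_mono) (auto simp: norm_mult idm_def pauliY_def)
  finally show ?thesis by simp
qed

lemma entries_bounded_rot: "entries_bounded n (rot n q t) 2"
  unfolding entries_bounded_def rot_def on_qubit_def using norm_rotY_le by auto

lemma entries_bounded_Vl: "entries_bounded n (Vl n nc l \<theta>) 2"
  unfolding Vl_def using entries_bounded_rot by auto

lemma entries_bounded_CXl: "entries_bounded n (CXl n nc l) 1"
  unfolding entries_bounded_def CXl_def cnot_def by (auto simp: idm_def pauliX_def)

lemma entries_bounded_sc_partial: "\<exists>a. \<forall>\<theta>. entries_bounded n (sc_partial n nc m \<theta>) a"
proof (induction m)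
  case 0
  have "\<exists>a. \<forall>\<theta>. entries_bounded n (V1_aux n q \<theta>) a" for q
  proof (induction q)
    case 0
    have "entries_bounded n idm 1" unfolding entries_bounded_def idm_def by auto
    then show ?case by auto
  next
    case (Suc q)
    then obtain a where "\<And>\<theta>. entries_bounded n (V1_aux n q \<theta>) a" by blast
    then have "entries_bounded n (V1_aux n (Suc q) \<theta>) (2^n * 2 * a)" for \<theta>
      using entries_bounded_mmul[OF entries_bounded_rot] by simp
    then show ?case by blast
  qed
  then show ?case by (simp add: V1_def)
next
  case (Suc m)
  then obtain a where "\<And>\<theta>. entries_bounded n (sc_partial n nc m \<theta>) a" by blast
  then have "entries_bounded n (sc_partial n nc (Suc m) \<theta>) (2^n * 2 * (2^n * 1 * a))" for \<theta>
    using entries_bounded_mmul[OF entries_bounded_Vl entries_bounded_mmul[OF entries_bounded_CXl]]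
    by simp
  then show ?case by blast
qed

lemma z1_expval_V_SC_bounded: "\<exists>K. \<forall>\<theta>. \<bar>z1_expval n \<rho> (V_SC n nc \<theta>)\<bar> \<le> K"
proof -
  obtain a where a: "\<And>\<theta>. entries_bounded n (V_SC n nc \<theta>) a"
    using entries_bounded_sc_partial unfolding V_SC_def by blast
  obtain r where r: "entries_bounded n \<rho> r" using entries_bounded_exists by blast
  have Z: "entries_bounded n (Z1 n) 1"
    unfolding entries_bounded_def Z1_def on_qubit_def pauliZ_def by auto
  have "entries_bounded n (mmul (2^n) (Z1 n) (mmul (2^n) (V_SC n nc \<theta>)
      (mmul (2^n) \<rho> (adj (V_SC n nc \<theta>))))) (2^n * 1 * (2^n * a * (2^n * r * a)))" for \<theta>
    by (intro entries_bounded_mmul Z a r entries_bounded_adj)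
  then have "\<bar>z1_expval n \<rho> (V_SC n nc \<theta>)\<bar> \<le> 2^n * (2^n * 1 * (2^n * a * (2^n * r * a)))" for \<theta>
    unfolding z1_expval_def by (rule order_trans[OF abs_Re_le_cmod norm_mtrace_le])
  then show ?thesis by blast
qed

definition mat_measurable :: "'a measure \<Rightarrow> ('a \<Rightarrow> cmat) \<Rightarrow> bool" where
  "mat_measurable M A \<longleftrightarrow> (\<forall>i j. (\<lambda>x. A x i j) \<in> borel_measurable M)"

lemma mat_measurable_const: "mat_measurable M (\<lambda>_. A)"
  unfolding mat_measurable_def by simp

lemma mat_measurable_mmul:
  "mat_measurable M A \<Longrightarrow> mat_measurable M B \<Longrightarrow> mat_measurable M (\<lambda>x. mmul d (A x) (B x))"
  unfolding mat_measurable_def mmul_def by (auto intro!: borel_measurable_sum borel_measurable_times)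

lemma mat_measurable_adj: "mat_measurable M A \<Longrightarrow> mat_measurable M (\<lambda>x. adj (A x))"
  unfolding mat_measurable_def adj_def
  by (auto intro!: borel_measurable_continuous_on[where f=cnj] continuous_intros)

lemma mat_measurable_rot:
  assumes "g \<in> borel_measurable M"
  shows "mat_measurable M (\<lambda>x. rot n q (g x))"
  unfolding mat_measurable_def rot_def on_qubit_def
proof (intro allI)
  fix i j
  have "continuous_on UNIV (\<lambda>t. rotY t (qbit n q i) (qbit n q j))"
    unfolding rotY_def by (intro continuous_intros)
  from borel_measurable_continuous_on[OF this assms]
  show "(\<lambda>x. if \<forall>p\<in>{1..n}. p \<noteq> q \<longrightarrow> qbit n p i = qbit n p j
      then rotY (g x) (qbit n q i) (qbit n q j) else 0) \<in> borel_measurable M"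
    by simp
qed

lemma mat_measurable_sc_partial:
  assumes "\<And>i. (\<lambda>x. \<phi> x i) \<in> borel_measurable M"
  shows "mat_measurable M (\<lambda>x. sc_partial n nc m (\<phi> x))"
proof (induction m)
  case 0
  have "mat_measurable M (\<lambda>x. V1_aux n q (\<phi> x))" for q
    by (induction q) (auto intro!: mat_measurable_mmul mat_measurable_rot assms
        simp: mat_measurable_const)
  then show ?case by (simp add: V1_def)
next
  case (Suc m)
  have "mat_measurable M (\<lambda>x. Vl n nc (Suc (Suc m)) (\<phi> x))"
    unfolding Vl_def using assms
    by (cases "Suc (Suc m) \<le> n - nc") (auto intro: mat_measurable_rot)
  with Suc show ?case by (auto intro!: mat_measurable_mmul mat_measurable_const)
qed

lemma z1_expval_V_SC_measurable:
  assumes "\<And>i. (\<lambda>x. \<phi> x i) \<in> borel_measurable M"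
  shows "(\<lambda>x. z1_expval n \<rho> (V_SC n nc (\<phi> x))) \<in> borel_measurable M"
proof -
  have "mat_measurable M (\<lambda>x. mmul (2^n) (Z1 n)
      (mmul (2^n) (V_SC n nc (\<phi> x)) (mmul (2^n) \<rho> (adj (V_SC n nc (\<phi> x))))))"
    unfolding V_SC_def using assms
    by (intro mat_measurable_mmul mat_measurable_const mat_measurable_sc_partial mat_measurable_adj)
  then have "(\<lambda>x. mtrace (2^n) (mmul (2^n) (Z1 n)
      (mmul (2^n) (V_SC n nc (\<phi> x)) (mmul (2^n) \<rho> (adj (V_SC n nc (\<phi> x))))))) \<in> borel_measurable M"
    unfolding mtrace_def mat_measurable_def by (auto intro!: borel_measurable_sum)
  from measurable_compose[OF this borel_measurable_Re] show ?thesis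
    unfolding z1_expval_def by simp
qed

section \<open>Averaging over the angles\<close>

abbreviation unif_angle :: "real measure" where
  "unif_angle \<equiv> uniform_measure lborel {0..2*pi}"

lemma prob_space_unif_angle: "prob_space unif_angle"
  by (rule prob_space_uniform_measure) auto

lemma integral_unif_angle:
  fixes f :: "real \<Rightarrow> real"
  assumes "f \<in> borel_measurable borel"
  shows "integral\<^sup>L unif_angle f = (\<integral>x. indicator {0..2*pi} x *\<^sub>R f x \<partial>lborel) / (2*pi)"
proof -
  have "(\<lambda>x. (indicator {0..2*pi} x :: ennreal) / emeasure lborel {0..2*pi})
      = (\<lambda>x. ennreal (indicator {0..2*pi} x / (2*pi)))"
  proof
    fix x
    show "(indicator {0..2*pi} x :: ennreal) / emeasure lborel {0..2*pi}
        = ennreal (indicator {0..2*pi} x / (2*pi))"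
      by (cases "x \<in> {0..2*pi}")
        (auto simp: divide_ennreal[symmetric] ennreal_1[symmetric] simp del: ennreal_1 atLeastAtMost_iff)
  qed
  then have "unif_angle = density lborel (\<lambda>x. ennreal (indicator {0..2*pi} x / (2*pi)))"
    unfolding uniform_measure_def by simp
  then have "integral\<^sup>L unif_angle f = (\<integral>x. (indicator {0..2*pi} x / (2*pi)) *\<^sub>R f x \<partial>lborel)"
    using assms by (simp add: integral_density)
  then show ?thesis by (simp add: mult.commute)
qed

lemma sinusoid_sq_eq:
  fixes a b u :: real
  shows "(a * cos u + b * sin u)^2 = (a^2 + b^2)/2 + (a^2 - b^2)/2 * cos (2*u) + a*b * sin (2*u)"
proof -
  have "(a * cos u + b * sin u)^2 = a^2 * (cos u)^2 + 2*a*b*(sin u * cos u) + b^2 * (sin u)^2"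
    by algebra
  then show ?thesis
    unfolding cos_double_sin sin_double cos_squared_eq by (simp add: algebra_simps divide_simps)
qed

lemma abs_sinusoid_le:
  fixes a b u :: real
  shows "\<bar>a * cos u + b * sin u\<bar> \<le> \<bar>a\<bar> + \<bar>b\<bar>"
proof -
  have "\<bar>a * cos u\<bar> \<le> \<bar>a\<bar>" "\<bar>b * sin u\<bar> \<le> \<bar>b\<bar>"
    using abs_cos_le_one[of u] abs_sin_le_one[of u] by (simp_all add: abs_mult mult_left_le)
  then show ?thesis by linarith
qed

lemma integral_unif_angle_sinusoid_sq:
  fixes a b :: real
  shows "(\<integral>y. (a * cos (2*y) + b * sin (2*y))^2 \<partial>unif_angle) = (a^2 + b^2) / 2"
proof -
  define G where "G y = (a^2 + b^2) * y / 2 + (a^2 - b^2) * sin (4 * y) / 8 - a * b * cos (4 * y) / 4"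
    for y :: real
  have "(G has_real_derivative (a * cos (2*y) + b * sin (2*y))^2) (at y)" for y
  proof -
    have "(G has_real_derivative
        ((a^2 + b^2)/2 + (a^2 - b^2)/2 * cos (2*(2*y)) + a*b * sin (2*(2*y)))) (at y)"
      unfolding G_def by (auto intro!: derivative_eq_intros simp: field_simps)
    then show ?thesis by (simp only: sinusoid_sq_eq)
  qed
  then have "(\<integral>y. indicator {0..2*pi} y *\<^sub>R (a * cos (2*y) + b * sin (2*y))^2 \<partial>lborel)
      = G (2*pi) - G 0"
    by (intro integral_FTC_atLeastAtMost)
      (auto intro!: continuous_intros simp: has_real_derivative_iff_has_vector_derivative[symmetric]
        intro: has_field_derivative_at_within)
  also have "\<dots> = (a^2 + b^2) * pi"
    using sin_npi[of 8] cos_npi_int[of 8] unfolding G_def by (simp add: mult_ac)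
  finally show ?thesis by (subst integral_unif_angle) auto
qed

lemma measurable_component_unif_angle:
  "(\<lambda>\<theta>. \<theta> i) \<in> borel_measurable (PiM I (\<lambda>_. unif_angle))"
proof (cases "i \<in> I")
  case True
  then have "(\<lambda>\<theta>. \<theta> i) \<in> measurable (PiM I (\<lambda>_. unif_angle)) unif_angle"
    by (rule measurable_component_singleton)
  moreover have "measurable (PiM I (\<lambda>_. unif_angle)) unif_angle
      = measurable (PiM I (\<lambda>_. unif_angle)) borel"
    by (rule measurable_cong_sets) auto
  ultimately show ?thesis by simp
next
  case False
  then have "(\<lambda>\<theta>. \<theta> i) \<in> borel_measurable (PiM I (\<lambda>_. unif_angle))
      \<longleftrightarrow> (\<lambda>\<theta>. undefined :: real) \<in> borel_measurable (PiM I (\<lambda>_. unif_angle))"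
    by (intro measurable_cong) (auto simp: space_PiM PiE_def extensional_def)
  then show ?thesis by simp
qed

lemma pderiv_param_sinusoid:
  assumes "\<And>t. f (\<theta>(k := t)) = c + a * cos (2*t) + b * sin (2*t)"
  shows "pderiv_param f k \<theta> = 2 * (b * cos (2 * \<theta> k) + (- a) * sin (2 * \<theta> k))"
proof -
  have "((\<lambda>t. c + a * cos (2*t) + b * sin (2*t)) has_real_derivative
      2 * (b * cos (2 * \<theta> k) + (- a) * sin (2 * \<theta> k))) (at (\<theta> k))"
    by (auto intro!: derivative_eq_intros simp: algebra_simps)
  then show ?thesis unfolding pderiv_param_def assms by (rule DERIV_imp_deriv)
qed

lemma integrable_PiM_unif_angle_bounded:
  fixes g :: "(nat \<Rightarrow> real) \<Rightarrow> real"
  assumes "g \<in> borel_measurable (PiM I (\<lambda>_. unif_angle))" and "\<And>\<theta>. \<bar>g \<theta>\<bar> \<le> B"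
  shows "integrable (PiM I (\<lambda>_. unif_angle)) g"
proof -
  interpret prob_space "PiM I (\<lambda>_. unif_angle)"
    by (rule prob_space_PiM) (rule prob_space_unif_angle)
  show ?thesis using assms by (intro integrable_const_bound[where B=B] AE_I2) auto
qed

lemma integral_PiM_unif_angle_insert:
  fixes g :: "(nat \<Rightarrow> real) \<Rightarrow> real"
  assumes "finite I" "k \<in> I" and "integrable (PiM I (\<lambda>_. unif_angle)) g"
  shows "integral\<^sup>L (PiM I (\<lambda>_. unif_angle)) g
    = (\<integral>x. (\<integral>y. g (x(k := y)) \<partial>unif_angle) \<partial>PiM (I - {k}) (\<lambda>_. unif_angle))"
proof -
  interpret product_prob_space "\<lambda>_. unif_angle"
    by (rule product_prob_spaceI) (rule prob_space_unif_angle)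
  define J where "J = I - {k}"
  have I: "I = insert k J" "finite J" "k \<notin> J" using assms(1,2) unfolding J_def by auto
  show ?thesis
    using assms(3) unfolding J_def[symmetric] unfolding I(1)
    by (rule product_integral_insert[OF I(2,3)])
qed

lemma integral_PiM_sinusoid_sq:
  fixes a b :: "(nat \<Rightarrow> real) \<Rightarrow> real"
  assumes I: "finite I" "k \<in> I"
    and meas: "a \<in> borel_measurable (PiM I (\<lambda>_. unif_angle))"
      "b \<in> borel_measurable (PiM I (\<lambda>_. unif_angle))"
    and bound: "\<And>\<theta>. \<bar>a \<theta>\<bar> \<le> K" "\<And>\<theta>. \<bar>b \<theta>\<bar> \<le> K"
    and indep: "\<And>\<theta> t. a (\<theta>(k := t)) = a \<theta>" "\<And>\<theta> t. b (\<theta>(k := t)) = b \<theta>"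
  shows "(\<integral>\<theta>. (a \<theta> * cos (2 * \<theta> k) + b \<theta> * sin (2 * \<theta> k))^2 \<partial>PiM I (\<lambda>_. unif_angle))
    = (\<integral>\<theta>. ((a \<theta>)^2 + (b \<theta>)^2) / 2 \<partial>PiM I (\<lambda>_. unif_angle))"
proof -
  let ?M = "PiM I (\<lambda>_. unif_angle)"
  have k_meas: "(\<lambda>\<theta>. \<theta> k) \<in> borel_measurable ?M"
    by (rule measurable_component_unif_angle)
  have "\<bar>a \<theta> * cos (2 * \<theta> k) + b \<theta> * sin (2 * \<theta> k)\<bar> \<le> \<bar>2 * K\<bar>" for \<theta>
    using abs_sinusoid_le[of "a \<theta>" "2 * \<theta> k" "b \<theta>"] bound[of \<theta>] by linarith
  then have int_sq: "integrable ?M (\<lambda>\<theta>. (a \<theta> * cos (2 * \<theta> k) + b \<theta> * sin (2 * \<theta> k))^2)"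
    using meas k_meas
    by (intro integrable_PiM_unif_angle_bounded[where B="(2 * K)^2"]) (auto simp: abs_le_square_iff)
  have "\<bar>((a \<theta>)^2 + (b \<theta>)^2) / 2\<bar> \<le> K^2" for \<theta>
  proof -
    have "(a \<theta>)^2 \<le> K^2" "(b \<theta>)^2 \<le> K^2"
      using bound[of \<theta>] by (metis abs_ge_zero power2_abs power_mono)+
    then show ?thesis by simp
  qed
  then have int_mean: "integrable ?M (\<lambda>\<theta>. ((a \<theta>)^2 + (b \<theta>)^2) / 2)"
    using meas by (intro integrable_PiM_unif_angle_bounded[where B="K^2"]) auto
  have "(\<integral>\<theta>. (a \<theta> * cos (2 * \<theta> k) + b \<theta> * sin (2 * \<theta> k))^2 \<partial>?M)
      = (\<integral>x. ((a x)^2 + (b x)^2) / 2 \<partial>PiM (I - {k}) (\<lambda>_. unif_angle))"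
    by (simp add: integral_PiM_unif_angle_insert[OF I int_sq] indep integral_unif_angle_sinusoid_sq)
  also have "\<dots> = (\<integral>\<theta>. ((a \<theta>)^2 + (b \<theta>)^2) / 2 \<partial>?M)"
    by (subst integral_PiM_unif_angle_insert[OF I int_mean])
      (simp add: indep prob_space.prob_space[OF prob_space_unif_angle])
  finally show ?thesis .
qed

lemma integral_sq_pderiv_sinusoid:
  fixes f :: "(nat \<Rightarrow> real) \<Rightarrow> real"
  assumes I: "finite I" "k \<in> I"
    and sinusoid: "\<And>\<theta> t. f (\<theta>(k := t)) - c
      = (f (\<theta>(k := 0)) - c) * cos (2*t) + (f (\<theta>(k := pi/4)) - c) * sin (2*t)"
    and bound: "\<And>\<theta>. \<bar>f \<theta> - c\<bar> \<le> K"
    and meas: "f \<in> borel_measurable (PiM I (\<lambda>_. unif_angle))"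
  shows "(\<integral>\<theta>. (pderiv_param f k \<theta>)^2 \<partial>PiM I (\<lambda>_. unif_angle))
    = 4 * (\<integral>\<theta>. (f \<theta> - c)^2 \<partial>PiM I (\<lambda>_. unif_angle))"
proof -
  let ?M = "PiM I (\<lambda>_. unif_angle)"
  define a where "a \<theta> = f (\<theta>(k := 0)) - c" for \<theta>
  define b where "b \<theta> = f (\<theta>(k := pi/4)) - c" for \<theta>
  have upd_meas: "(\<lambda>\<theta>. f (\<theta>(k := t))) \<in> borel_measurable ?M" for t
  proof -
    have "(\<lambda>\<theta>. \<theta>(k := t)) \<in> measurable ?M ?M"
      using I by (intro measurable_fun_upd[where J=I]) auto
    then show ?thesis using meas by measurable
  qed
  have a_meas: "a \<in> borel_measurable ?M" and b_meas: "b \<in> borel_measurable ?M"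
    unfolding a_def b_def using upd_meas by measurable
  have a_le: "\<bar>a \<theta>\<bar> \<le> K" and b_le: "\<bar>b \<theta>\<bar> \<le> K" for \<theta>
    unfolding a_def b_def by (rule bound)+
  have a_upd: "a (\<theta>(k := t)) = a \<theta>" and b_upd: "b (\<theta>(k := t)) = b \<theta>" for \<theta> t
    unfolding a_def b_def by simp_all
  have f_upd: "f (\<theta>(k := t)) = c + a \<theta> * cos (2*t) + b \<theta> * sin (2*t)" for \<theta> t
    using sinusoid[of \<theta> t] unfolding a_def b_def by simp
  have "(pderiv_param f k \<theta>)^2 = 4 * (b \<theta> * cos (2 * \<theta> k) + (- a \<theta>) * sin (2 * \<theta> k))^2"
    for \<theta>
    unfolding pderiv_param_sinusoid[OF f_upd] power_mult_distrib by simp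
  then have "(\<integral>\<theta>. (pderiv_param f k \<theta>)^2 \<partial>?M)
      = 4 * (\<integral>\<theta>. (b \<theta> * cos (2 * \<theta> k) + (- a \<theta>) * sin (2 * \<theta> k))^2 \<partial>?M)"
    by simp
  also have "\<dots> = 4 * (\<integral>\<theta>. ((b \<theta>)^2 + (- a \<theta>)^2) / 2 \<partial>?M)"
    using integral_PiM_sinusoid_sq[OF I b_meas borel_measurable_uminus[OF a_meas], where K=K] b_le a_le
      b_upd a_upd by (simp add: mult.commute)
  also have "\<dots> = 4 * (\<integral>\<theta>. (f \<theta> - c)^2 \<partial>?M)"
    using integral_PiM_sinusoid_sq[OF I a_meas b_meas a_le b_le a_upd b_upd] f_upd[of \<theta> "\<theta> k" for \<theta>]
    by (simp add: add.commute)
  finally show ?thesis .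
qed

theorem lemma10:
  fixes n nc k :: nat and \<rho> :: cmat
  assumes "n \<ge> 2" and "1 \<le> nc" and "nc \<le> n - 1"
    and "density_matrix (2^n) \<rho>"
    and "k \<in> qubit1_params n nc"
  shows "(\<integral>\<theta>. (pderiv_param (f_SC n nc \<rho>) k \<theta>)^2 \<partial>param_measure n)
       = 4 * (\<integral>\<theta>. (f_SC n nc \<rho> \<theta> - 1/2)^2 \<partial>param_measure n)"
proof -
  (* The identity holds for every matrix \<rho>. *)
  note nc = assms(2,3) and k = assms(5)
  obtain K where K: "\<And>\<theta>. \<bar>z1_expval n \<rho> (V_SC n nc \<theta>)\<bar> \<le> K"
    using z1_expval_V_SC_bounded by blast
  have "k \<in> {1..2*n-1}"
    using k assms(1) unfolding qubit1_params_def sc_param_index_def by auto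
  then show ?thesis
    unfolding param_measure_def
  proof (rule integral_sq_pderiv_sinusoid[OF finite_atLeastAtMost _ _ _, where K="K/2"])
    show "f_SC n nc \<rho> (\<theta>(k := t)) - 1/2
        = (f_SC n nc \<rho> (\<theta>(k := 0)) - 1/2) * cos (2*t)
          + (f_SC n nc \<rho> (\<theta>(k := pi/4)) - 1/2) * sin (2*t)" for \<theta> t
      unfolding f_SC_eq using z1_expval_V_SC_sinusoid[OF nc k, of \<rho> \<theta> t] by simp
    show "\<bar>f_SC n nc \<rho> \<theta> - 1/2\<bar> \<le> K/2" for \<theta>
      unfolding f_SC_eq using K[of \<theta>] by simp
    show "f_SC n nc \<rho> \<in> borel_measurable (PiM {1..2*n-1} (\<lambda>_. unif_angle))"
      unfolding f_SC_eq[abs_def]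
      using z1_expval_V_SC_measurable[where \<phi>="\<lambda>\<theta>. \<theta>", OF measurable_component_unif_angle]
      by simp
  qed
qed

end
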